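(* Let $X$ be a finite set and $S\subset\mathbb F_X$. Then $S$ is UB-generic if and only if for every $n\in\mathbb N$ there exists $\omega_n\in\mathbb F_X$ such that $\omega_n B_n\subset S$.
   Context: $\mathbb F_X$ is the free group on $X$, $|\omega|$ the reduced word length, $B_n=\{\omega\in\mathbb F_X:|\omega|\le n\}$. The Upper Banach density of $S\subset\mathbb F_X$ is $\overline\mu(S)=\limsup_{n\to\infty}\max_{\omega\in\mathbb F_X}\frac{|S\cap\omega B_n|}{|B_n|}$, and $S$ is UB-generic if $\overline\mu(S)=1$. *)

theory Defs
  imports Complex_Main "HOL-Library.Extended_Real"
begin

text \<open>Free group on a set X, realised as reduced words. A letter is a pair (x, b):
  (x, False) is the generator x, (x, True) is its inverse.\<close>

type_synonym 'a word = "('a \<times> bool) list"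

definition inv_letter :: "'a \<times> bool \<Rightarrow> 'a \<times> bool" where
  "inv_letter l = (fst l, \<not> snd l)"

definition reduced :: "'a word \<Rightarrow> bool" where
  "reduced w \<longleftrightarrow> (\<forall>i. Suc i < length w \<longrightarrow> w ! Suc i \<noteq> inv_letter (w ! i))"

fun reduce :: "'a word \<Rightarrow> 'a word" where
  "reduce [] = []"
| "reduce (a # w) = (case reduce w of
       [] \<Rightarrow> [a]
     | b # r \<Rightarrow> (if b = inv_letter a then r else a # b # r))"

definition fg_mult :: "'a word \<Rightarrow> 'a word \<Rightarrow> 'a word" where
  "fg_mult u v = reduce (u @ v)"

definition free_group :: "'a set \<Rightarrow> 'a word set" where
  "free_group X = {w. set (map fst w) \<subseteq> X \<and> reduced w}"

definition ball_n :: "'a set \<Rightarrow> nat \<Rightarrow> 'a word set" where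
  "ball_n X n = {w \<in> free_group X. length w \<le> n}"

definition left_translate :: "'a word \<Rightarrow> 'a word set \<Rightarrow> 'a word set" where
  "left_translate \<omega> A = fg_mult \<omega> ` A"

definition upper_banach_density :: "'a set \<Rightarrow> 'a word set \<Rightarrow> ereal" where
  "upper_banach_density X S =
     limsup (\<lambda>n. ereal (SUP \<omega>\<in>free_group X.
        real (card (S \<inter> left_translate \<omega> (ball_n X n))) / real (card (ball_n X n))))"

definition UB_generic :: "'a set \<Rightarrow> 'a word set \<Rightarrow> bool" where
  "UB_generic X S \<longleftrightarrow> upper_banach_density X S = 1"

end

theory Submission
  imports Defs
begin

text \<open>If no translate of the ball \<open>B\<^sub>N\<close> lies in \<open>S\<close>, then every \<open>h \<in> \<omega>B\<^sub>n\<^sub>-\<^sub>N\<close> has a point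
  of \<open>\<omega>B\<^sub>n - S\<close> in \<open>hB\<^sub>N\<close>. Hence \<open>\<omega>B\<^sub>n\<^sub>-\<^sub>N\<close> is covered by \<open>|\<omega>B\<^sub>n - S|\<close> translates of
  \<open>B\<^sub>N\<^sup>-\<^sup>1\<close>, and together with \<open>|B\<^sub>n| \<le> |B\<^sub>n\<^sub>-\<^sub>N| |B\<^sub>N|\<close> this shows that \<open>S\<close> misses at least
  the fraction \<open>1/|B\<^sub>N|\<^sup>2\<close> of every ball of radius \<open>n \<ge> N\<close>, so the upper Banach density of \<open>S\<close>
  is below 1. Conversely, a translate of \<open>B\<^sub>n\<close> inside \<open>S\<close> gives density ratio 1 at radius \<open>n\<close>.\<close>

definition cancel_cons :: "'a \<times> bool \<Rightarrow> 'a word \<Rightarrow> 'a word" where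
  "cancel_cons a w = (case w of [] \<Rightarrow> [a] | b # r \<Rightarrow> (if b = inv_letter a then r else a # b # r))"

lemma reduce_Cons: "reduce (a # w) = cancel_cons a (reduce w)"
  by (simp add: cancel_cons_def)

declare reduce.simps(2)[simp del]

lemma inv_letter_inv_letter [simp]: "inv_letter (inv_letter a) = a"
  by (simp add: inv_letter_def)

lemma reduced_Nil [simp]: "reduced []"
  by (simp add: reduced_def)

lemma reduced_Cons: "reduced (a # w) \<longleftrightarrow> reduced w \<and> (w \<noteq> [] \<longrightarrow> hd w \<noteq> inv_letter a)"
proof
  assume h: "reduced (a # w)"
  have "reduced w"
    unfolding reduced_def using h[unfolded reduced_def, rule_format, of "Suc _"] by simp
  moreover have "w \<noteq> [] \<longrightarrow> hd w \<noteq> inv_letter a"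
    using h[unfolded reduced_def, rule_format, of 0] by (cases w) auto
  ultimately show "reduced w \<and> (w \<noteq> [] \<longrightarrow> hd w \<noteq> inv_letter a)" by blast
next
  assume h: "reduced w \<and> (w \<noteq> [] \<longrightarrow> hd w \<noteq> inv_letter a)"
  show "reduced (a # w)" unfolding reduced_def
  proof (intro allI impI)
    fix i assume i: "Suc i < length (a # w)"
    show "(a # w) ! Suc i \<noteq> inv_letter ((a # w) ! i)"
    proof (cases i)
      case 0 then show ?thesis using h i by (cases w) auto
    next
      case (Suc j) then show ?thesis using h i unfolding reduced_def by auto
    qed
  qed
qed

lemma reduced_take: "reduced w \<Longrightarrow> reduced (take k w)"
  unfolding reduced_def by auto

lemma reduced_drop: "reduced w \<Longrightarrow> reduced (drop k w)"
  unfolding reduced_def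
proof (intro allI impI)
  fix i assume "\<forall>i. Suc i < length w \<longrightarrow> w ! Suc i \<noteq> inv_letter (w ! i)"
    and "Suc i < length (drop k w)"
  then show "drop k w ! Suc i \<noteq> inv_letter (drop k w ! i)"
    using spec[of _ "k + i"] by simp
qed

lemma reduced_cancel_cons: "reduced w \<Longrightarrow> reduced (cancel_cons a w)"
  by (cases w) (auto simp: cancel_cons_def reduced_Cons)

lemma reduced_foldr_cancel_cons: "reduced w \<Longrightarrow> reduced (foldr cancel_cons u w)"
  by (induction u) (auto simp: reduced_cancel_cons)

lemma reduced_reduce: "reduced (reduce w)"
  by (induction w) (auto simp: reduce_Cons reduced_cancel_cons)

lemma reduce_reduced: "reduced w \<Longrightarrow> reduce w = w"
proof (induction w)
  case (Cons a w)
  then have "reduce w = w" by (simp add: reduced_Cons)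
  then show ?case using Cons.prems by (cases w) (auto simp: reduce_Cons cancel_cons_def reduced_Cons)
qed simp

lemma reduce_append: "reduce (u @ v) = foldr cancel_cons u (reduce v)"
  by (induction u) (auto simp: reduce_Cons)

lemma reduce_append_reduce_right: "reduce (u @ reduce v) = reduce (u @ v)"
  by (simp add: reduce_append reduce_reduced reduced_reduce)

lemma cancel_cons_inv_letter: "reduced w \<Longrightarrow> cancel_cons a (cancel_cons (inv_letter a) w) = w"
proof (cases w)
  case (Cons c w')
  assume "reduced w"
  then have "c = a \<longrightarrow> w' = [] \<or> hd w' \<noteq> inv_letter a" using Cons by (auto simp: reduced_Cons)
  then show ?thesis using Cons by (cases w') (auto simp: cancel_cons_def inv_letter_def)
qed (simp add: cancel_cons_def inv_letter_def)

lemma foldr_cancel_cons_cancel_cons: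
  assumes "reduced w"
  shows "foldr cancel_cons (cancel_cons a r) w = cancel_cons a (foldr cancel_cons r w)"
proof (cases r)
  case (Cons b r')
  show ?thesis
  proof (cases "b = inv_letter a")
    case True
    then have "cancel_cons a r = r'" using Cons by (simp add: cancel_cons_def)
    then show ?thesis
      using Cons True cancel_cons_inv_letter[OF reduced_foldr_cancel_cons[OF assms], of a r'] by simp
  qed (use Cons in \<open>simp add: cancel_cons_def\<close>)
qed (simp add: cancel_cons_def)

lemma reduce_append_reduce_left: "reduce (reduce u @ v) = reduce (u @ v)"
proof (induction u)
  case (Cons a u)
  have "reduce (reduce (a # u) @ v) = foldr cancel_cons (cancel_cons a (reduce u)) (reduce v)"
    by (simp add: reduce_Cons reduce_append)
  also have "\<dots> = cancel_cons a (reduce (reduce u @ v))"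
    by (simp add: foldr_cancel_cons_cancel_cons reduced_reduce reduce_append)
  also have "\<dots> = reduce ((a # u) @ v)" using Cons by (simp add: reduce_Cons)
  finally show ?case .
qed simp

lemma fg_mult_assoc: "fg_mult (fg_mult u v) w = fg_mult u (fg_mult v w)"
  unfolding fg_mult_def by (simp add: reduce_append_reduce_left reduce_append_reduce_right)

definition word_inv :: "'a word \<Rightarrow> 'a word" where
  "word_inv w = rev (map inv_letter w)"

lemma word_inv_word_inv [simp]: "word_inv (word_inv w) = w"
  by (simp add: word_inv_def rev_map comp_def)

lemma foldr_cancel_cons_word_inv:
  "reduced v \<Longrightarrow> foldr cancel_cons (word_inv w) (foldr cancel_cons w v) = v"
proof (induction w)
  case (Cons a w)
  have "cancel_cons (inv_letter a) (cancel_cons a (foldr cancel_cons w v)) = foldr cancel_cons w v"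
    using cancel_cons_inv_letter[OF reduced_foldr_cancel_cons[OF Cons.prems], of "inv_letter a"]
    by simp
  then show ?case using Cons by (simp add: word_inv_def)
qed (simp add: word_inv_def)

lemma fg_mult_word_inv_left: "reduced v \<Longrightarrow> fg_mult (word_inv w) (fg_mult w v) = v"
  unfolding fg_mult_def reduce_append_reduce_right
  by (simp add: reduce_append foldr_cancel_cons_word_inv reduced_reduce reduce_reduced)

lemma fg_mult_word_inv_right: "reduced u \<Longrightarrow> fg_mult (fg_mult u w) (word_inv w) = u"
proof -
  assume "reduced u"
  have "fg_mult w (word_inv w) = []"
    using fg_mult_word_inv_left[of "[]" "word_inv w"] by (simp add: fg_mult_def reduce_append_reduce_right)
  then show ?thesis
    using \<open>reduced u\<close> by (simp add: fg_mult_assoc) (simp add: fg_mult_def reduce_reduced)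
qed

lemma fg_mult_left_cancel:
  "reduced u \<Longrightarrow> reduced v \<Longrightarrow> fg_mult w u = fg_mult w v \<Longrightarrow> u = v"
  by (metis fg_mult_word_inv_left)

lemma length_reduce: "length (reduce w) \<le> length w"
proof (induction w)
  case (Cons a w)
  have "length (cancel_cons a (reduce w)) \<le> Suc (length (reduce w))"
    by (cases "reduce w") (auto simp: cancel_cons_def)
  then show ?case using Cons by (simp add: reduce_Cons)
qed simp

lemma length_fg_mult: "length (fg_mult u v) \<le> length u + length v"
  using length_reduce[of "u @ v"] by (simp add: fg_mult_def)

lemma set_reduce: "set (reduce w) \<subseteq> set w"
proof (induction w)
  case (Cons a w)
  have "set (cancel_cons a (reduce w)) \<subseteq> insert a (set (reduce w))"
    by (cases "reduce w") (auto simp: cancel_cons_def)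
  then show ?case using Cons by (auto simp: reduce_Cons)
qed simp

lemma fg_mult_closed: "u \<in> free_group X \<Longrightarrow> v \<in> free_group X \<Longrightarrow> fg_mult u v \<in> free_group X"
  using set_reduce[of "u @ v"] unfolding free_group_def fg_mult_def
  by (auto simp: reduced_reduce) force

lemma Nil_in_free_group: "[] \<in> free_group X"
  by (simp add: free_group_def)

lemma Nil_in_ball_n: "[] \<in> ball_n X n"
  by (simp add: ball_n_def Nil_in_free_group)

lemma finite_ball_n: "finite X \<Longrightarrow> finite (ball_n X n)"
  by (rule finite_subset[of _ "{w. set w \<subseteq> X \<times> UNIV \<and> length w \<le> n}"])
    (auto simp: ball_n_def free_group_def intro!: finite_lists_length_le)

lemma card_ball_n_pos: "finite X \<Longrightarrow> card (ball_n X n) > 0"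
  using finite_ball_n Nil_in_ball_n card_gt_0_iff by blast

lemma card_left_translate: "card (left_translate \<omega> (ball_n X n)) = card (ball_n X n)"
  unfolding left_translate_def
  by (rule card_image) (auto intro: inj_onI fg_mult_left_cancel simp: ball_n_def free_group_def)

lemma finite_left_translate: "finite X \<Longrightarrow> finite (left_translate \<omega> (ball_n X n))"
  unfolding left_translate_def using finite_ball_n by blast

lemma card_ball_n_le_mult:
  assumes "finite X" and "n \<le> k + m"
  shows "card (ball_n X n) \<le> card (ball_n X k) * card (ball_n X m)"
proof -
  have "ball_n X n \<subseteq> case_prod fg_mult ` (ball_n X k \<times> ball_n X m)"
  proof
    fix w assume w: "w \<in> ball_n X n"
    then have "w = fg_mult (take k w) (drop k w)"
      by (simp add: fg_mult_def reduce_reduced ball_n_def free_group_def)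
    moreover have "take k w \<in> ball_n X k" "drop k w \<in> ball_n X m"
      using w assms(2) unfolding ball_n_def free_group_def
      by (auto simp: reduced_take reduced_drop dest: in_set_takeD in_set_dropD)
    ultimately show "w \<in> case_prod fg_mult ` (ball_n X k \<times> ball_n X m)" by force
  qed
  then have "card (ball_n X n) \<le> card (case_prod fg_mult ` (ball_n X k \<times> ball_n X m))"
    by (intro card_mono finite_imageI finite_cartesian_product finite_ball_n assms(1))
  also have "\<dots> \<le> card (ball_n X k \<times> ball_n X m)"
    by (intro card_image_le finite_cartesian_product finite_ball_n assms(1))
  finally show ?thesis by (simp add: card_cartesian_product)
qed

lemma left_translate_subset_UN_missed:
  assumes no_translate: "\<forall>h\<in>free_group X. \<not> left_translate h (ball_n X N) \<subseteq> S"
    and "\<omega> \<in> free_group X" and "N \<le> n"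
  shows "left_translate \<omega> (ball_n X (n - N))
    \<subseteq> (\<Union>x\<in>left_translate \<omega> (ball_n X n) - S. (\<lambda>y. fg_mult x (word_inv y)) ` ball_n X N)"
proof
  fix h assume "h \<in> left_translate \<omega> (ball_n X (n - N))"
  then obtain v where v: "v \<in> ball_n X (n - N)" and h: "h = fg_mult \<omega> v"
    unfolding left_translate_def by auto
  have h_in: "h \<in> free_group X" using h assms(2) v fg_mult_closed unfolding ball_n_def by blast
  obtain y where y: "y \<in> ball_n X N" and hy: "fg_mult h y \<notin> S"
    using no_translate h_in unfolding left_translate_def by blast
  have "fg_mult v y \<in> ball_n X n"
    using v y fg_mult_closed length_fg_mult[of v y] assms(3) unfolding ball_n_def by fastforce
  then have "fg_mult h y \<in> left_translate \<omega> (ball_n X n) - S"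
    using hy unfolding left_translate_def h fg_mult_assoc by blast
  moreover have "h = fg_mult (fg_mult h y) (word_inv y)"
    using h_in by (simp add: fg_mult_word_inv_right free_group_def)
  ultimately show "h \<in> (\<Union>x\<in>left_translate \<omega> (ball_n X n) - S. (\<lambda>y. fg_mult x (word_inv y)) ` ball_n X N)"
    using y by blast
qed

lemma card_ball_n_le_missed:
  assumes "finite X" and "\<forall>h\<in>free_group X. \<not> left_translate h (ball_n X N) \<subseteq> S"
    and "\<omega> \<in> free_group X" and "N \<le> n"
  shows "card (ball_n X n) \<le> card (left_translate \<omega> (ball_n X n) - S) * card (ball_n X N) ^ 2"
proof -
  define D where "D = left_translate \<omega> (ball_n X n) - S"
  have "finite D" unfolding D_def using finite_left_translate[OF assms(1)] by simp
  have "card (ball_n X (n - N)) = card (left_translate \<omega> (ball_n X (n - N)))"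
    by (simp add: card_left_translate)
  also have "\<dots> \<le> card (\<Union>x\<in>D. (\<lambda>y. fg_mult x (word_inv y)) ` ball_n X N)"
    using left_translate_subset_UN_missed[OF assms(2-4)] \<open>finite D\<close> finite_ball_n[OF assms(1)]
    by (intro card_mono) (auto simp: D_def)
  also have "\<dots> \<le> (\<Sum>x\<in>D. card ((\<lambda>y. fg_mult x (word_inv y)) ` ball_n X N))"
    using \<open>finite D\<close> by (rule card_UN_le)
  also have "\<dots> \<le> (\<Sum>x\<in>D. card (ball_n X N))"
    by (intro sum_mono card_image_le finite_ball_n assms(1))
  finally have "card (ball_n X (n - N)) \<le> card D * card (ball_n X N)" by simp
  have "card (ball_n X n) \<le> card (ball_n X (n - N)) * card (ball_n X N)"
    using assms(1,4) by (intro card_ball_n_le_mult) auto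
  also have "\<dots> \<le> card D * card (ball_n X N) * card (ball_n X N)"
    using \<open>card (ball_n X (n - N)) \<le> card D * card (ball_n X N)\<close> by (rule mult_le_mono1)
  finally show ?thesis by (simp add: D_def power2_eq_square mult.assoc)
qed

definition ball_density :: "'a set \<Rightarrow> 'a word set \<Rightarrow> nat \<Rightarrow> 'a word \<Rightarrow> real" where
  "ball_density X S n \<omega> =
     real (card (S \<inter> left_translate \<omega> (ball_n X n))) / real (card (ball_n X n))"

lemma upper_banach_density_eq_limsup:
  "upper_banach_density X S = limsup (\<lambda>n. ereal (SUP \<omega>\<in>free_group X. ball_density X S n \<omega>))"
  by (simp add: upper_banach_density_def ball_density_def)

lemma ball_density_le_1:
  assumes "finite X"
  shows "ball_density X S n \<omega> \<le> 1"
proof -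
  have "card (S \<inter> left_translate \<omega> (ball_n X n)) \<le> card (ball_n X n)"
    using card_mono[OF finite_left_translate[OF assms] Int_lower2] by (simp add: card_left_translate)
  then show ?thesis
    using card_ball_n_pos[OF assms, of n] by (simp add: ball_density_def)
qed

lemma ball_density_eq_1:
  "finite X \<Longrightarrow> left_translate \<omega> (ball_n X n) \<subseteq> S \<Longrightarrow> ball_density X S n \<omega> = 1"
  using card_ball_n_pos[of X n]
  by (simp add: ball_density_def Int_absorb1 card_left_translate)

lemma ball_density_le_if_no_translate:
  assumes "finite X" and "\<forall>h\<in>free_group X. \<not> left_translate h (ball_n X N) \<subseteq> S"
    and "\<omega> \<in> free_group X" and "N \<le> n"
  shows "ball_density X S n \<omega> \<le> 1 - 1 / real (card (ball_n X N)) ^ 2"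
proof -
  define T where "T = left_translate \<omega> (ball_n X n)"
  define b where "b = real (card (ball_n X n))"
  define c where "c = real (card (ball_n X N))"
  define d where "d = real (card (T - S))"
  have "finite T" unfolding T_def using assms(1) by (rule finite_left_translate)
  then have "card (S \<inter> T) + card (T - S) = card (ball_n X n)"
    using card_Int_Diff[of T S] by (simp add: T_def card_left_translate Int_commute)
  then have "real (card (S \<inter> T)) = b - d" by (simp add: b_def d_def flip: of_nat_add)
  moreover have "b > 0" "c > 0"
    using card_ball_n_pos[OF assms(1)] by (auto simp: b_def c_def)
  ultimately have density: "ball_density X S n \<omega> = 1 - d / b"
    by (simp add: ball_density_def T_def[symmetric] b_def[symmetric] diff_divide_distrib)
  have "b \<le> d * c ^ 2"
    using card_ball_n_le_missed[OF assms] unfolding b_def c_def d_def T_def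
    by (metis of_nat_le_iff of_nat_mult of_nat_power)
  then have "1 / c ^ 2 \<le> d / b" using \<open>b > 0\<close> \<open>c > 0\<close> by (simp add: field_simps)
  then show ?thesis by (simp add: density c_def)
qed

lemma UB_generic_imp_translate_subset:
  assumes "finite X" and "UB_generic X S"
  shows "\<exists>\<omega>\<in>free_group X. left_translate \<omega> (ball_n X N) \<subseteq> S"
proof (rule ccontr)
  assume no_translate: "\<not> ?thesis"
  define q where "q = 1 - 1 / real (card (ball_n X N)) ^ 2"
  have "\<forall>n\<ge>N. ereal (SUP \<omega>\<in>free_group X. ball_density X S n \<omega>) \<le> ereal q"
    using ball_density_le_if_no_translate[OF assms(1)] no_translate Nil_in_free_group[of X]
    by (auto intro!: cSUP_least simp: q_def)
  then have "upper_banach_density X S \<le> ereal q"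
    unfolding upper_banach_density_eq_limsup
    by (intro Limsup_bounded) (auto simp: eventually_sequentially)
  moreover have "q < 1" using card_ball_n_pos[OF assms(1), of N] by (simp add: q_def)
  ultimately show False using assms(2) by (simp add: UB_generic_def)
qed

lemma UB_generic_if_translate_subset:
  assumes "finite X" and "\<forall>n. \<exists>\<omega>\<in>free_group X. left_translate \<omega> (ball_n X n) \<subseteq> S"
  shows "UB_generic X S"
proof -
  have "(SUP \<omega>\<in>free_group X. ball_density X S n \<omega>) = 1" for n
  proof (rule antisym)
    show "(SUP \<omega>\<in>free_group X. ball_density X S n \<omega>) \<le> 1"
      using Nil_in_free_group[of X] ball_density_le_1[OF assms(1)] by (auto intro: cSUP_least)
    obtain \<omega> where "\<omega> \<in> free_group X" "left_translate \<omega> (ball_n X n) \<subseteq> S"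
      using assms(2) by blast
    then show "1 \<le> (SUP \<omega>\<in>free_group X. ball_density X S n \<omega>)"
      using ball_density_eq_1[OF assms(1)] ball_density_le_1[OF assms(1)]
      by (metis bdd_aboveI2 cSUP_upper2)
  qed
  then show ?thesis
    by (simp add: UB_generic_def upper_banach_density_eq_limsup Limsup_const)
qed

theorem proposition2p2:
  fixes X :: "'a set" and S :: "'a word set"
  assumes "finite X" and "S \<subseteq> free_group X"
  shows "UB_generic X S \<longleftrightarrow>
         (\<forall>n::nat. \<exists>\<omega>\<in>free_group X. left_translate \<omega> (ball_n X n) \<subseteq> S)"
  using UB_generic_imp_translate_subset UB_generic_if_translate_subset assms(1) by blast

end
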